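(* Let $(X_k)_{k\in\mathbb N}$ be Banach spaces such that infinitely many of the $X_k$ are infinite dimensional. Then $(\bigoplus_{k=1}^\infty X_k)_{T^*}$ is not asymptotic-$c_0$.
   Context: $T$ is the completion of $c_{00}$ under the norm satisfying $\|x\|_T=\max\{\|x\|_\infty,\frac12\sup\sum_{j=1}^n\|E_j(x)\|_T\}$, supremum over $n$ and finite sets $n\le E_1<\dots<E_n$ (with $E(x)$ the restriction of $x$ to $E$); $T^*$ is its dual with $1$-unconditional basis of coordinate functionals $(e_j)$. $(\bigoplus X_k)_{T^*}$ is the space of $(x_k)$, $x_k\in X_k$, with $\sum\|x_k\|e_k$ convergent in $T^*$, normed by $\|\sum\|x_k\|e_k\|_{T^*}$. Two finite basic sequences are $c$-equivalent if there are $A,B>0$, $AB\le c$, with $\frac1A\|\sum a_ix_i\|\le\|\sum a_iy_i\|\le B\|\sum a_ix_i\|$. $\{X\}_k$ is the set of norms $E$ on $\mathbb R^k$ with unit vector basis normalized monotone such that: for every $\varepsilon>0$, for every closed finite-codimensional $X_1$ there is $x_1\in S_{X_1}$, ..., for every closed finite-codimensional $X_k$ there is $x_k\in S_{X_k}$ with $(x_j)$ $(1+\varepsilon)$-equivalent to $(e_j)$. $X$ is asymptotic-$c_0$ if for some $c$ every $E\in\{X\}_k$, $k\in\mathbb N$, has basis $c$-equivalent to the $\ell_\infty^k$ unit vector basis. *)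

theory Defs
  imports "HOL-Analysis.Analysis" "HOL-Library.Function_Algebras"
begin

instantiation "fun" :: (type, real_vector) real_vector
begin
definition scaleR_fun :: "real \<Rightarrow> ('a \<Rightarrow> 'b) \<Rightarrow> 'a \<Rightarrow> 'b"
  where "scaleR_fun c f = (\<lambda>x. c *\<^sub>R f x)"
instance
  by standard (auto simp: scaleR_fun_def fun_eq_iff scaleR_add_right scaleR_add_left)
end

text \<open>Vectors are indexed by nat starting at 0: position p (0-based) is the
 coordinate e_(p+1) of the paper. Hence the admissibility condition
 n \<le> E_1 (1-based) reads n \<le> Suc (Min E_1) in 0-based positions.\<close>

definition c00 :: "(nat \<Rightarrow> real) \<Rightarrow> bool"
  where "c00 x \<longleftrightarrow> finite {i. x i \<noteq> 0}"

definition restr :: "nat set \<Rightarrow> (nat \<Rightarrow> real) \<Rightarrow> nat \<Rightarrow> real"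
  where "restr E x = (\<lambda>i. if i \<in> E then x i else 0)"

definition admissible :: "nat set list \<Rightarrow> bool"
  where "admissible Es \<longleftrightarrow>
     (\<forall>j < length Es. finite (Es ! j) \<and> Es ! j \<noteq> {}) \<and>
     (\<forall>j. Suc j < length Es \<longrightarrow> Max (Es ! j) < Min (Es ! Suc j)) \<and>
     (length Es > 0 \<longrightarrow> length Es \<le> Suc (Min (Es ! 0)))"

definition sup_norm :: "(nat \<Rightarrow> real) \<Rightarrow> real"
  where "sup_norm x = Sup (range (\<lambda>i. \<bar>x i\<bar>))"

text \<open>Figiel--Johnson iteration; the Tsirelson norm is its (increasing) limit, which is
 the norm on c00 satisfying the implicit equation of the paper.\<close>
fun tsi_iter :: "nat \<Rightarrow> (nat \<Rightarrow> real) \<Rightarrow> real" where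
  "tsi_iter 0 x = sup_norm x"
| "tsi_iter (Suc m) x = max (tsi_iter m x)
     ((1/2) * Sup {(\<Sum>j < length Es. tsi_iter m (restr (Es ! j) x)) | Es. admissible Es})"

definition tsi_norm :: "(nat \<Rightarrow> real) \<Rightarrow> real"
  where "tsi_norm x = Sup (range (\<lambda>m. tsi_iter m x))"

text \<open>Norm in T* of the (formal) series sum b_k e_k: its norm as a functional on T,
 computed on the dense subspace c00.\<close>
definition tstar_norm :: "(nat \<Rightarrow> real) \<Rightarrow> real"
  where "tstar_norm b = Sup {(\<Sum>i \<in> {i. x i \<noteq> 0}. b i * x i) | x. c00 x \<and> tsi_norm x \<le> 1}"

text \<open>Convergence of sum b_k e_k in T* (a Banach space): the partial sums are Cauchy.\<close>
definition tstar_convergent :: "(nat \<Rightarrow> real) \<Rightarrow> bool"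
  where "tstar_convergent b \<longleftrightarrow>
     (\<forall>e>0. \<exists>M. \<forall>m n. M \<le> m \<longrightarrow>
        tstar_norm (\<lambda>i. if m \<le> i \<and> i < n then b i else 0) < e)"

definition tstar_sum :: "(nat \<Rightarrow> 'a::real_normed_vector set) \<Rightarrow> (nat \<Rightarrow> 'a) set"
  where "tstar_sum X = {x. (\<forall>k. x k \<in> X k) \<and> tstar_convergent (\<lambda>k. norm (x k))}"

definition tstar_sum_norm :: "(nat \<Rightarrow> 'a::real_normed_vector) \<Rightarrow> real"
  where "tstar_sum_norm x = tstar_norm (\<lambda>k. norm (x k))"

definition fin_codim_closed :: "'v::real_vector set \<Rightarrow> ('v \<Rightarrow> real) \<Rightarrow> 'v set \<Rightarrow> bool"
  where "fin_codim_closed V N W \<longleftrightarrow>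
     subspace W \<and> W \<subseteq> V \<and>
     (\<forall>s y. (\<forall>n. s n \<in> W) \<longrightarrow> y \<in> V \<longrightarrow> (\<lambda>n. N (s n - y)) \<longlonglongrightarrow> 0 \<longrightarrow> y \<in> W) \<and>
     (\<exists>F. finite F \<and> F \<subseteq> V \<and> V \<subseteq> {w + f | w f. w \<in> W \<and> f \<in> span F})"

text \<open>E is a norm on R^k (vectors a :: nat => real, only a 0..a (k-1) matter) whose
 unit vector basis is normalized and monotone.\<close>
definition nm_norm :: "nat \<Rightarrow> ((nat \<Rightarrow> real) \<Rightarrow> real) \<Rightarrow> bool"
  where "nm_norm k E \<longleftrightarrow>
     (\<forall>a. E a = E (\<lambda>i. if i < k then a i else 0)) \<and>
     (\<forall>a. E a = 0 \<longleftrightarrow> (\<forall>i<k. a i = 0)) \<and>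
     (\<forall>a b. E (\<lambda>i. a i + b i) \<le> E a + E b) \<and>
     (\<forall>c a. E (\<lambda>i. c * a i) = \<bar>c\<bar> * E a) \<and>
     (\<forall>i<k. E (\<lambda>j. if j = i then 1 else 0) = 1) \<and>
     (\<forall>a m. m \<le> k \<longrightarrow> E (\<lambda>i. if i < m then a i else 0) \<le> E a)"

definition equiv_to_basis :: "('v::real_vector \<Rightarrow> real) \<Rightarrow> ((nat \<Rightarrow> real) \<Rightarrow> real) \<Rightarrow> real \<Rightarrow> 'v list \<Rightarrow> bool"
  where "equiv_to_basis N E c xs \<longleftrightarrow>
     (\<exists>A B. A > 0 \<and> B > 0 \<and> A * B \<le> c \<and>
        (\<forall>a. (1/A) * N (\<Sum>j < length xs. a j *\<^sub>R xs ! j) \<le> E a \<and>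
             E a \<le> B * N (\<Sum>j < length xs. a j *\<^sub>R xs ! j)))"

fun asym_game :: "'v::real_vector set \<Rightarrow> ('v \<Rightarrow> real) \<Rightarrow> ((nat \<Rightarrow> real) \<Rightarrow> real) \<Rightarrow> real
     \<Rightarrow> nat \<Rightarrow> 'v list \<Rightarrow> bool" where
  "asym_game V N E \<epsilon> 0 xs = equiv_to_basis N E (1 + \<epsilon>) xs"
| "asym_game V N E \<epsilon> (Suc m) xs =
     (\<forall>W. fin_codim_closed V N W \<longrightarrow>
        (\<exists>x \<in> W. N x = 1 \<and> asym_game V N E \<epsilon> m (xs @ [x])))"

definition asym_struct :: "'v::real_vector set \<Rightarrow> ('v \<Rightarrow> real) \<Rightarrow> nat \<Rightarrow> ((nat \<Rightarrow> real) \<Rightarrow> real) set"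
  where "asym_struct V N k = {E. nm_norm k E \<and> (\<forall>\<epsilon>>0. asym_game V N E \<epsilon> k [])}"

definition linf_norm :: "nat \<Rightarrow> (nat \<Rightarrow> real) \<Rightarrow> real"
  where "linf_norm k a = Max (insert 0 ((\<lambda>i. \<bar>a i\<bar>) ` {..<k}))"

definition asymptotic_c0 :: "'v::real_vector set \<Rightarrow> ('v \<Rightarrow> real) \<Rightarrow> bool"
  where "asymptotic_c0 V N \<longleftrightarrow>
     (\<exists>c. \<forall>k. \<forall>E \<in> asym_struct V N k.
        (\<exists>A B. A > 0 \<and> B > 0 \<and> A * B \<le> c \<and>
           (\<forall>a. (1/A) * E a \<le> linf_norm k a \<and> linf_norm k a \<le> B * E a)))"

definition infinite_dimensional :: "'a::real_vector set \<Rightarrow> bool"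
  where "infinite_dimensional S \<longleftrightarrow> \<not> (\<exists>B. finite B \<and> B \<subseteq> S \<and> S \<subseteq> span B)"

end

theory Submission
  imports Defs
begin

text \<open>Enumerate the infinite-dimensional summands as \<open>X (kk j)\<close>. Every closed subspace of finite
  codimension contains a norm-one vector supported in the single coordinate \<open>kk j\<close> (an
  infinite-dimensional space does not inject linearly into a finite-dimensional one), so playing
  such vectors shows that the norm of \<open>T\<^sup>*\<close> restricted to the span of the unit vectors at
  \<open>kk 0, \<dots>, kk (n - 1)\<close> belongs to the asymptotic structure. If the sum were asymptotic-\<open>c\<^sub>0\<close>
  with constant \<open>c\<close>, the \<open>T\<^sup>*\<close>-norm of the sum of these unit vectors would be at most \<open>c\<close> for
  every \<open>n\<close>. By duality it is at least \<open>l1_norm y\<close> for every nonnegative \<open>y\<close> supported in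
  \<open>range kk\<close> with Tsirelson norm at most \<open>1\<close>. But the Tsirelson norm is not equivalent to the
  \<open>\<ell>\<^sub>1\<close>-norm on any subsequence of the basis: averaging \<open>M\<close> blocks, each far to the right of
  the previous one, halves the ratio of the two norms up to an error \<open>1 / M\<close>, and iterating
  this \<open>r\<close> times produces vectors of \<open>\<ell>\<^sub>1\<close>-norm \<open>1\<close> and Tsirelson norm about \<open>2\<^sup>-\<^sup>r\<close>.\<close>

section \<open>Finitely supported sequences\<close>

definition supp :: "(nat \<Rightarrow> real) \<Rightarrow> nat set"
  where "supp x = {i. x i \<noteq> 0}"

definition l1_norm :: "(nat \<Rightarrow> real) \<Rightarrow> real"
  where "l1_norm x = (\<Sum>i\<in>supp x. \<bar>x i\<bar>)"

lemma c00_iff_finite_supp: "c00 x \<longleftrightarrow> finite (supp x)"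
  by (simp add: c00_def supp_def)

lemma supp_restr: "supp (restr E x) = supp x \<inter> E"
  by (auto simp: restr_def supp_def)

lemma restr_restr: "restr E (restr S x) = restr (E \<inter> S) x"
  by (auto simp: restr_def)

lemma c00_zero: "c00 (\<lambda>i. 0)"
  by (simp add: c00_def)

lemma c00_restr: "c00 x \<Longrightarrow> c00 (restr E x)"
  by (simp add: c00_iff_finite_supp supp_restr)

lemma c00_add: "c00 x \<Longrightarrow> c00 y \<Longrightarrow> c00 (\<lambda>i. x i + y i)"
  unfolding c00_def by (rule finite_subset[of _ "{i. x i \<noteq> 0} \<union> {i. y i \<noteq> 0}"]) auto

lemma c00_mult: "c00 x \<Longrightarrow> c00 (\<lambda>i. c * x i)"
  unfolding c00_def by (rule finite_subset[of _ "{i. x i \<noteq> 0}"]) auto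

lemma c00_abs: "c00 x \<Longrightarrow> c00 (\<lambda>i. \<bar>x i\<bar>)"
  by (simp add: c00_def)

lemma c00_sum: "finite T \<Longrightarrow> (\<And>t. t \<in> T \<Longrightarrow> c00 (x t)) \<Longrightarrow> c00 (\<lambda>i. \<Sum>t\<in>T. x t i)"
  by (induction T rule: finite_induct) (simp_all add: c00_zero c00_add)

lemma l1_norm_nonneg: "0 \<le> l1_norm x"
  by (simp add: l1_norm_def sum_nonneg)

lemma l1_norm_superset: "finite D \<Longrightarrow> supp x \<subseteq> D \<Longrightarrow> l1_norm x = (\<Sum>i\<in>D. \<bar>x i\<bar>)"
  unfolding l1_norm_def by (rule sum.mono_neutral_left) (auto simp: supp_def)

lemma l1_norm_restr: "l1_norm (restr E x) = (\<Sum>i\<in>supp x \<inter> E. \<bar>x i\<bar>)"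
  unfolding l1_norm_def supp_restr by (rule sum.cong) (auto simp: restr_def)

lemma l1_norm_restr_le: "c00 x \<Longrightarrow> l1_norm (restr E x) \<le> l1_norm x"
  unfolding l1_norm_restr unfolding l1_norm_def c00_iff_finite_supp by (intro sum_mono2) auto

lemma abs_le_l1_norm: "c00 x \<Longrightarrow> \<bar>x i\<bar> \<le> l1_norm x"
  unfolding l1_norm_def c00_iff_finite_supp
  by (cases "i \<in> supp x") (auto intro: member_le_sum simp: supp_def sum_nonneg)

lemma supp_scaled_sum_subset: "supp (\<lambda>i. c * (\<Sum>t\<in>T. V t i)) \<subseteq> (\<Union>t\<in>T. supp (V t))"
  unfolding supp_def by (auto elim: sum.not_neutral_contains_not_neutral)

lemma restr_scaled_sum: "restr E (\<lambda>i. c * (\<Sum>t\<in>T. V t i)) = (\<lambda>i. c * (\<Sum>t\<in>T. restr E (V t) i))"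
  by (auto simp: restr_def)

lemma l1_norm_mult: "l1_norm (\<lambda>i. c * x i) = \<bar>c\<bar> * l1_norm x"
  by (cases "c = 0") (simp_all add: l1_norm_def supp_def abs_mult sum_distrib_left)

lemma l1_norm_scaled_sum:
  assumes "finite T" "\<And>t. t \<in> T \<Longrightarrow> c00 (V t)" "\<And>t i. 0 \<le> V t i" "0 \<le> c"
  shows "l1_norm (\<lambda>i. c * (\<Sum>t\<in>T. V t i)) = c * (\<Sum>t\<in>T. l1_norm (V t))"
proof -
  define D where "D = (\<Union>t\<in>T. supp (V t))"
  have "finite D"
    unfolding D_def using assms(1,2) by (auto simp: c00_iff_finite_supp)
  have "l1_norm (\<lambda>i. c * (\<Sum>t\<in>T. V t i)) = (\<Sum>i\<in>D. c * (\<Sum>t\<in>T. V t i))"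
    using l1_norm_superset[OF \<open>finite D\<close> supp_scaled_sum_subset[of c V T, folded D_def]] assms(3,4)
    by (simp add: sum_nonneg)
  also have "\<dots> = c * (\<Sum>t\<in>T. \<Sum>i\<in>D. V t i)"
    by (simp add: sum_distrib_left sum.swap[of _ D])
  also have "\<dots> = c * (\<Sum>t\<in>T. l1_norm (V t))"
  proof -
    have "(\<Sum>i\<in>D. V t i) = l1_norm (V t)" if "t \<in> T" for t
    proof -
      have "supp (V t) \<subseteq> D"
        using that by (auto simp: D_def)
      then show ?thesis
        using l1_norm_superset[OF \<open>finite D\<close>] assms(3) by simp
    qed
    then show ?thesis by simp
  qed
  finally show ?thesis .
qed

lemma sup_norm_bdd: "c00 x \<Longrightarrow> bdd_above (range (\<lambda>i. \<bar>x i\<bar>))"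
  by (rule bdd_aboveI[of _ "l1_norm x"]) (auto intro: abs_le_l1_norm)

lemma abs_le_sup_norm: "c00 x \<Longrightarrow> \<bar>x i\<bar> \<le> sup_norm x"
  unfolding sup_norm_def by (rule cSUP_upper[OF _ sup_norm_bdd]) auto

lemma sup_norm_le: "(\<And>i. \<bar>x i\<bar> \<le> B) \<Longrightarrow> sup_norm x \<le> B"
  unfolding sup_norm_def by (rule cSUP_least) auto

lemma sup_norm_nonneg: "c00 x \<Longrightarrow> 0 \<le> sup_norm x"
  using abs_le_sup_norm[of x 0] by linarith

lemma sup_norm_le_l1_norm: "c00 x \<Longrightarrow> sup_norm x \<le> l1_norm x"
  by (intro sup_norm_le abs_le_l1_norm)

section \<open>The Tsirelson norm\<close>

lemma admissible_Nil: "admissible []"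
  by (simp add: admissible_def)

lemma admissible_Max_less_Min:
  assumes "admissible Es" "i < j" "j < length Es"
  shows "Max (Es ! i) < Min (Es ! j)"
  using assms(2,3)
proof (induction j)
  case (Suc j)
  have "Max (Es ! j) < Min (Es ! Suc j)" "Min (Es ! j) \<le> Max (Es ! j)"
    using assms(1) Suc.prems unfolding admissible_def by auto
  then show ?case
    using Suc by (cases "i = j") auto
qed simp

lemma admissible_disjoint:
  assumes "admissible Es" "i < length Es" "j < length Es" "i \<noteq> j"
  shows "Es ! i \<inter> Es ! j = {}"
proof -
  have "Es ! i \<inter> Es ! j = {}" if "i < j" "j < length Es" for i j
  proof -
    have "finite (Es ! i)" "finite (Es ! j)"
      using assms(1) that unfolding admissible_def by auto
    then show ?thesis
      using admissible_Max_less_Min[OF assms(1) that] by (meson Max_ge Min_le disjoint_iff le_less_trans not_le)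
  qed
  then show ?thesis
    using assms(2-4) by (metis inf_commute linorder_neqE_nat)
qed

lemma admissible_Min_le:
  assumes "admissible Es" "j < length Es" "x \<in> Es ! j"
  shows "Min (Es ! 0) \<le> x"
proof -
  have fin: "finite (Es ! k)" "Es ! k \<noteq> {}" if "k < length Es" for k
    using assms(1) that unfolding admissible_def by auto
  have "Min (Es ! 0) \<le> Min (Es ! j)"
  proof (cases j)
    case (Suc k)
    then have "Max (Es ! 0) < Min (Es ! j)"
      using admissible_Max_less_Min[OF assms(1), of 0 j] assms(2) by simp
    moreover have "0 < length Es"
      using assms(2) by linarith
    then have "Min (Es ! 0) \<le> Max (Es ! 0)"
      using fin[of 0] by (intro Max_ge Min_in) auto
    ultimately show ?thesis by simp
  qed simp
  also have "Min (Es ! j) \<le> x"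
    using fin[OF assms(2)] assms(3) by simp
  finally show ?thesis .
qed

lemma sum_admissible_l1_norm_le:
  assumes "admissible Es" "c00 x"
  shows "(\<Sum>j<length Es. l1_norm (restr (Es ! j) x)) \<le> l1_norm x"
proof -
  have "(\<Sum>j<length Es. l1_norm (restr (Es ! j) x)) = (\<Sum>i\<in>(\<Union>j<length Es. supp x \<inter> Es ! j). \<bar>x i\<bar>)"
    unfolding l1_norm_restr
    using assms admissible_disjoint[OF assms(1)]
    by (intro sum.UNION_disjoint[symmetric]) (auto simp: c00_iff_finite_supp)
  also have "\<dots> \<le> l1_norm x"
    unfolding l1_norm_def using assms(2) by (intro sum_mono2) (auto simp: c00_iff_finite_supp)
  finally show ?thesis .
qed

abbreviation adm_sums :: "nat \<Rightarrow> (nat \<Rightarrow> real) \<Rightarrow> real set" where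
  "adm_sums m x \<equiv> {(\<Sum>j < length Es. tsi_iter m (restr (Es ! j) x)) | Es. admissible Es}"

lemma adm_sums_least:
  "(\<And>Es. admissible Es \<Longrightarrow> (\<Sum>j < length Es. tsi_iter m (restr (Es ! j) x)) \<le> B)
   \<Longrightarrow> Sup (adm_sums m x) \<le> B"
  by (rule cSup_least) (use admissible_Nil in auto)

lemma tsi_iter_le_l1_norm: "c00 x \<Longrightarrow> tsi_iter m x \<le> l1_norm x"
proof (induction m arbitrary: x)
  case 0
  then show ?case by (simp add: sup_norm_le_l1_norm)
next
  case (Suc m)
  have "Sup (adm_sums m x) \<le> l1_norm x"
  proof (rule adm_sums_least)
    fix Es assume "admissible Es"
    have "(\<Sum>j<length Es. tsi_iter m (restr (Es ! j) x)) \<le> (\<Sum>j<length Es. l1_norm (restr (Es ! j) x))"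
      by (intro sum_mono Suc.IH c00_restr Suc.prems)
    also have "\<dots> \<le> l1_norm x"
      by (rule sum_admissible_l1_norm_le[OF \<open>admissible Es\<close> Suc.prems])
    finally show "(\<Sum>j<length Es. tsi_iter m (restr (Es ! j) x)) \<le> l1_norm x" .
  qed
  then show ?case
    using Suc l1_norm_nonneg[of x] by simp
qed

lemma sum_admissible_tsi_iter_le_l1_norm:
  assumes "admissible Es" "c00 x"
  shows "(\<Sum>j<length Es. tsi_iter m (restr (Es ! j) x)) \<le> l1_norm x"
proof -
  have "(\<Sum>j<length Es. tsi_iter m (restr (Es ! j) x)) \<le> (\<Sum>j<length Es. l1_norm (restr (Es ! j) x))"
    by (intro sum_mono tsi_iter_le_l1_norm c00_restr assms(2))
  also have "\<dots> \<le> l1_norm x"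
    by (rule sum_admissible_l1_norm_le[OF assms])
  finally show ?thesis .
qed

lemma sum_admissible_tsi_iter_le:
  assumes "admissible Es" "c00 x"
  shows "(\<Sum>j<length Es. tsi_iter m (restr (Es ! j) x)) \<le> 2 * tsi_iter (Suc m) x"
proof -
  have "bdd_above (adm_sums m x)"
    using sum_admissible_tsi_iter_le_l1_norm[OF _ assms(2)] by (intro bdd_aboveI[of _ "l1_norm x"]) auto
  then have "(\<Sum>j<length Es. tsi_iter m (restr (Es ! j) x)) \<le> Sup (adm_sums m x)"
    using assms(1) by (intro cSup_upper) auto
  then show ?thesis by simp
qed

lemma tsi_iter_Suc_le:
  assumes "tsi_iter m x \<le> B"
    and "\<And>Es. admissible Es \<Longrightarrow> (\<Sum>j<length Es. tsi_iter m (restr (Es ! j) x)) \<le> 2 * B"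
  shows "tsi_iter (Suc m) x \<le> B"
  using assms adm_sums_least[of m x "2 * B"] by simp

lemma tsi_iter_nonneg: "c00 x \<Longrightarrow> 0 \<le> tsi_iter m x"
  by (induction m) (simp_all add: sup_norm_nonneg le_max_iff_disj)

lemma tsi_iter_mono: "m \<le> m' \<Longrightarrow> tsi_iter m x \<le> tsi_iter m' x"
  by (induction m' rule: dec_induct) (auto intro: order_trans)

lemma tsi_iter_zero: "tsi_iter m (\<lambda>i. 0) = 0"
  using tsi_iter_le_l1_norm[OF c00_zero, of m] tsi_iter_nonneg[OF c00_zero, of m]
  by (simp add: l1_norm_def supp_def)

lemma tsi_iter_abs: "tsi_iter m (\<lambda>i. \<bar>x i\<bar>) = tsi_iter m x"
proof (induction m arbitrary: x)
  case 0
  then show ?case by (simp add: sup_norm_def)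
next
  case (Suc m)
  have "restr E (\<lambda>i. \<bar>x i\<bar>) = (\<lambda>i. \<bar>restr E x i\<bar>)" for E
    by (auto simp: restr_def)
  then show ?case
    by (simp add: Suc.IH)
qed

lemma tsi_iter_add_le:
  "c00 x \<Longrightarrow> c00 y \<Longrightarrow> tsi_iter m (\<lambda>i. x i + y i) \<le> tsi_iter m x + tsi_iter m y"
proof (induction m arbitrary: x y)
  case 0
  then show ?case
    by (auto intro!: sup_norm_le abs_triangle_ineq[THEN order_trans] add_mono abs_le_sup_norm)
next
  case (Suc m)
  show ?case
  proof (rule tsi_iter_Suc_le)
    show "tsi_iter m (\<lambda>i. x i + y i) \<le> tsi_iter (Suc m) x + tsi_iter (Suc m) y"
      using Suc.IH[OF Suc.prems] tsi_iter_mono[of m "Suc m" x] tsi_iter_mono[of m "Suc m" y] by linarith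
  next
    fix Es assume Es: "admissible Es"
    have "restr E (\<lambda>i. x i + y i) = (\<lambda>i. restr E x i + restr E y i)" for E
      by (auto simp: restr_def)
    then have "(\<Sum>j<length Es. tsi_iter m (restr (Es ! j) (\<lambda>i. x i + y i)))
        \<le> (\<Sum>j<length Es. tsi_iter m (restr (Es ! j) x)) + (\<Sum>j<length Es. tsi_iter m (restr (Es ! j) y))"
      unfolding sum.distrib[symmetric] by (intro sum_mono) (simp add: Suc.IH c00_restr Suc.prems)
    also have "\<dots> \<le> 2 * (tsi_iter (Suc m) x + tsi_iter (Suc m) y)"
      using sum_admissible_tsi_iter_le[OF Es Suc.prems(1), of m]
        sum_admissible_tsi_iter_le[OF Es Suc.prems(2), of m] by simp
    finally show "(\<Sum>j<length Es. tsi_iter m (restr (Es ! j) (\<lambda>i. x i + y i)))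
        \<le> 2 * (tsi_iter (Suc m) x + tsi_iter (Suc m) y)" .
  qed
qed

lemma tsi_iter_scale_le:
  "0 \<le> c \<Longrightarrow> c00 x \<Longrightarrow> tsi_iter m (\<lambda>i. c * x i) \<le> c * tsi_iter m x"
proof (induction m arbitrary: x)
  case 0
  then show ?case
    by (auto intro!: sup_norm_le simp: abs_mult mult_left_mono abs_le_sup_norm)
next
  case (Suc m)
  show ?case
  proof (rule tsi_iter_Suc_le)
    show "tsi_iter m (\<lambda>i. c * x i) \<le> c * tsi_iter (Suc m) x"
      using Suc.IH[OF Suc.prems] mult_left_mono[OF tsi_iter_mono[of m "Suc m" x] Suc.prems(1)]
      by linarith
  next
    fix Es assume Es: "admissible Es"
    have "restr E (\<lambda>i. c * x i) = (\<lambda>i. c * restr E x i)" for E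
      by (auto simp: restr_def)
    then have "(\<Sum>j<length Es. tsi_iter m (restr (Es ! j) (\<lambda>i. c * x i)))
        \<le> c * (\<Sum>j<length Es. tsi_iter m (restr (Es ! j) x))"
      unfolding sum_distrib_left by (intro sum_mono) (simp add: Suc.IH c00_restr Suc.prems)
    also have "\<dots> \<le> 2 * (c * tsi_iter (Suc m) x)"
      using mult_left_mono[OF sum_admissible_tsi_iter_le[OF Es Suc.prems(2), of m] Suc.prems(1)]
      by simp
    finally show "(\<Sum>j<length Es. tsi_iter m (restr (Es ! j) (\<lambda>i. c * x i)))
        \<le> 2 * (c * tsi_iter (Suc m) x)" .
  qed
qed

lemma tsi_iter_sum_le:
  "finite T \<Longrightarrow> (\<And>t. t \<in> T \<Longrightarrow> c00 (x t)) \<Longrightarrow>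
    tsi_iter m (\<lambda>i. \<Sum>t\<in>T. x t i) \<le> (\<Sum>t\<in>T. tsi_iter m (x t))"
proof (induction T rule: finite_induct)
  case empty
  then show ?case by (simp add: tsi_iter_zero)
next
  case (insert a F)
  then have "tsi_iter m (\<lambda>i. x a i + (\<Sum>t\<in>F. x t i)) \<le> tsi_iter m (x a) + tsi_iter m (\<lambda>i. \<Sum>t\<in>F. x t i)"
    by (intro tsi_iter_add_le c00_sum) auto
  with insert show ?case by simp
qed

lemma tsi_norm_ge: "c00 x \<Longrightarrow> tsi_iter m x \<le> tsi_norm x"
  unfolding tsi_norm_def
  by (rule cSUP_upper) (auto intro: tsi_iter_le_l1_norm)

lemma tsi_norm_le: "(\<And>m. tsi_iter m x \<le> B) \<Longrightarrow> tsi_norm x \<le> B"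
  unfolding tsi_norm_def by (rule cSUP_least) auto

lemma abs_le_tsi_norm: "c00 x \<Longrightarrow> \<bar>x i\<bar> \<le> tsi_norm x"
  using tsi_norm_ge[of x 0] abs_le_sup_norm[of x i] by simp

lemma tsi_norm_abs: "tsi_norm (\<lambda>i. \<bar>x i\<bar>) = tsi_norm x"
  by (simp add: tsi_norm_def tsi_iter_abs)

lemma tsi_norm_zero: "tsi_norm (\<lambda>i. 0) = 0"
  by (simp add: tsi_norm_def tsi_iter_zero)

section \<open>Repeated averages\<close>

lemma tsi_iter_scaled_sum_le:
  assumes "0 \<le> c" "finite T" "\<And>t. t \<in> T \<Longrightarrow> c00 (V t)"
  shows "tsi_iter m (\<lambda>i. c * (\<Sum>t\<in>T. V t i)) \<le> c * (\<Sum>t\<in>T. tsi_iter m (V t))"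
proof -
  have "tsi_iter m (\<lambda>i. c * (\<Sum>t\<in>T. V t i)) \<le> c * tsi_iter m (\<lambda>i. \<Sum>t\<in>T. V t i)"
    using assms by (intro tsi_iter_scale_le c00_sum)
  also have "\<dots> \<le> c * (\<Sum>t\<in>T. tsi_iter m (V t))"
    using assms by (intro mult_left_mono tsi_iter_sum_le)
  finally show ?thesis .
qed

definition tsi_dominated :: "real \<Rightarrow> real \<Rightarrow> (nat \<Rightarrow> real) \<Rightarrow> bool" where
  "tsi_dominated \<beta> \<delta> w \<longleftrightarrow> (\<forall>m S. tsi_iter m (restr S w) \<le> \<delta> + \<beta> * l1_norm (restr S w))"

lemma block_index_unique:
  assumes "strict_mono (a :: nat \<Rightarrow> nat)" "a t \<le> i" "i < a (Suc t)" "a t' \<le> i" "i < a (Suc t')"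
  shows "t = t'"
proof (rule ccontr)
  assume "t \<noteq> t'"
  then have "a (Suc t) \<le> a t' \<or> a (Suc t') \<le> a t"
    using assms(1) by (metis Suc_leI linorder_neqE_nat strict_mono_less_eq)
  then show False
    using assms(2-5) by linarith
qed

lemma sum_over_blocks_le_1:
  fixes f :: "nat \<Rightarrow> real" and a :: "nat \<Rightarrow> nat"
  assumes "strict_mono a" "\<And>t. f t \<le> 1" "\<And>t. f t \<noteq> 0 \<Longrightarrow> a t \<le> p \<and> p < a (Suc t)"
  shows "(\<Sum>t<M. f t) \<le> 1"
proof -
  define T where "T = {t. t < M \<and> f t \<noteq> 0}"
  have "finite T"
    unfolding T_def by simp
  have "card T \<le> Suc 0"
    using block_index_unique[OF assms(1)] assms(3)
    by (subst card_le_Suc0_iff_eq[OF \<open>finite T\<close>]) (unfold T_def, blast)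
  have "(\<Sum>t<M. f t) = (\<Sum>t\<in>T. f t)"
    unfolding T_def by (rule sum.mono_neutral_right) auto
  also have "\<dots> \<le> of_nat (card T) * 1"
    using assms(2) by (intro sum_bounded_above)
  also have "\<dots> \<le> 1"
    using \<open>card T \<le> Suc 0\<close> by simp
  finally show ?thesis .
qed

lemma sum_admissible_tsi_iter_restr_eq_0:
  assumes "\<And>j. j < length Es \<Longrightarrow> supp x \<inter> Es ! j = {}"
  shows "(\<Sum>j<length Es. tsi_iter m (restr (Es ! j) x)) = 0"
proof -
  have "restr (Es ! j) x = (\<lambda>i. 0)" if "j < length Es" for j
    using assms[OF that] by (auto simp: restr_def supp_def fun_eq_iff)
  then show ?thesis
    by (simp add: tsi_iter_zero)
qed

lemma sum_admissible_tsi_iter_le_dominated: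
  assumes "admissible Es" "c00 u" "tsi_dominated \<beta> \<delta> u" "0 \<le> \<beta>"
  shows "(\<Sum>j<length Es. tsi_iter m (restr (Es ! j) u)) \<le> real (length Es) * \<delta> + \<beta> * l1_norm u"
proof -
  have "(\<Sum>j<length Es. tsi_iter m (restr (Es ! j) u))
      \<le> (\<Sum>j<length Es. \<delta> + \<beta> * l1_norm (restr (Es ! j) u))"
    using assms(3) unfolding tsi_dominated_def by (intro sum_mono) blast
  also have "\<dots> = real (length Es) * \<delta> + \<beta> * (\<Sum>j<length Es. l1_norm (restr (Es ! j) u))"
    by (simp add: sum.distrib sum_distrib_left)
  also have "\<dots> \<le> real (length Es) * \<delta> + \<beta> * l1_norm u"
    using sum_admissible_l1_norm_le[OF assms(1,2)] assms(4) by (simp add: mult_left_mono)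
  finally show ?thesis .
qed

lemma tsi_dominated_restr: "tsi_dominated \<beta> \<delta> u \<Longrightarrow> tsi_dominated \<beta> \<delta> (restr S u)"
  by (simp add: tsi_dominated_def restr_restr)

text \<open>An admissible family starting at \<open>p = Min (Es ! 0)\<close> sees a block \<open>u\<close> on \<open>[lo, hi)\<close> in
  one of three ways: if \<open>p < lo\<close> it has at most \<open>lo + 1\<close> members, so domination of \<open>u\<close> applies
  with the small \<open>\<delta>\<close>; if \<open>p\<close> lies in the block it gains at most \<open>l1_norm u \<le> 1\<close>; otherwise it
  misses \<open>u\<close>. In an average of \<open>M\<close> consecutive blocks only one is of the second kind, which is
  why averaging halves \<open>\<beta>\<close> at the cost of an additive \<open>1 / M\<close>.\<close>

lemma sum_admissible_tsi_iter_block_le: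
  assumes Es: "admissible Es" "Es \<noteq> []"
    and u: "c00 u" "supp u \<subseteq> {lo..<hi}" "l1_norm u \<le> 1" "tsi_dominated \<beta> \<delta> u"
    and \<delta>: "0 \<le> \<delta>" "real (lo + 1) * \<delta> \<le> \<eta>" and "0 \<le> \<beta>" "0 \<le> \<eta>"
  shows "(\<Sum>j<length Es. tsi_iter m (restr (Es ! j) u))
    \<le> \<eta> + \<beta> * l1_norm u + (if lo \<le> Min (Es ! 0) \<and> Min (Es ! 0) < hi then 1 else 0)"
proof -
  define p where "p = Min (Es ! 0)"
  have "0 \<le> \<beta> * l1_norm u"
    using \<open>0 \<le> \<beta>\<close> by (simp add: l1_norm_nonneg)
  consider "p < lo" | "lo \<le> p" "p < hi" | "hi \<le> p"
    by linarith
  then show ?thesis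
  proof cases
    case 1
    have "real (length Es) * \<delta> \<le> real (lo + 1) * \<delta>"
      using Es 1 \<delta>(1) by (intro mult_right_mono) (auto simp: admissible_def p_def)
    then show ?thesis
      using sum_admissible_tsi_iter_le_dominated[OF Es(1) u(1,4) \<open>0 \<le> \<beta>\<close>, of m] 1 \<delta>(2)
      by (simp add: p_def)
  next
    case 2
    then show ?thesis
      using sum_admissible_tsi_iter_le_l1_norm[OF Es(1) u(1), of m] u(3) \<open>0 \<le> \<eta>\<close>
        \<open>0 \<le> \<beta> * l1_norm u\<close>
      by (simp add: p_def)
  next
    case 3
    have "supp u \<inter> Es ! j = {}" if "j < length Es" for j
      using u(2) admissible_Min_le[OF Es(1) that] 3 by (fastforce simp: p_def)
    then show ?thesis
      using sum_admissible_tsi_iter_restr_eq_0 \<open>0 \<le> \<eta>\<close> \<open>0 \<le> \<beta> * l1_norm u\<close>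
      by (simp add: p_def)
  qed
qed

lemma sup_norm_block_average_le:
  fixes U :: "nat \<Rightarrow> nat \<Rightarrow> real" and a :: "nat \<Rightarrow> nat"
  assumes "strict_mono a" "\<And>t i. 0 \<le> U t i" "\<And>t. c00 (U t)"
    "\<And>t. supp (U t) \<subseteq> {a t..<a (Suc t)}" "\<And>t. l1_norm (U t) \<le> 1"
  shows "sup_norm (\<lambda>i. 1 / real M * (\<Sum>t<M. U t i)) \<le> 1 / real M"
proof (rule sup_norm_le)
  fix i
  have "(\<Sum>t<M. U t i) \<le> 1"
  proof (rule sum_over_blocks_le_1[OF assms(1)])
    fix t
    show "U t i \<le> 1"
      using abs_le_l1_norm[OF assms(3), of t i] assms(5)[of t] by simp
    show "U t i \<noteq> 0 \<Longrightarrow> a t \<le> i \<and> i < a (Suc t)"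
      using assms(4)[of t] by (auto simp: supp_def)
  qed
  then show "\<bar>1 / real M * (\<Sum>t<M. U t i)\<bar> \<le> 1 / real M"
    using assms(2) by (simp add: sum_nonneg divide_right_mono)
qed

lemma sum_admissible_tsi_iter_block_average_le:
  fixes U :: "nat \<Rightarrow> nat \<Rightarrow> real" and a :: "nat \<Rightarrow> nat"
  assumes M: "0 < M" "1 / real M \<le> \<epsilon> / 2" and a: "strict_mono a"
    and U: "\<And>t i. 0 \<le> U t i" "\<And>t. c00 (U t)" "\<And>t. supp (U t) \<subseteq> {a t..<a (Suc t)}"
      "\<And>t. l1_norm (U t) \<le> 1" "\<And>t. tsi_dominated \<beta> (d t) (U t)"
    and d: "\<And>t. 0 \<le> d t" "\<And>t. real (a t + 1) * d t \<le> \<epsilon> / 2" and "0 \<le> \<beta>"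
    and Es: "admissible Es" "Es \<noteq> []"
  shows "(\<Sum>j<length Es. tsi_iter m (restr (Es ! j) (\<lambda>i. 1 / real M * (\<Sum>t<M. U t i))))
    \<le> \<epsilon> + \<beta> * l1_norm (\<lambda>i. 1 / real M * (\<Sum>t<M. U t i))"
proof -
  define first where "first t = (if a t \<le> Min (Es ! 0) \<and> Min (Es ! 0) < a (Suc t) then 1 else 0 :: real)" for t
  have "0 \<le> \<epsilon>"
    using M(2) zero_le_divide_1_iff[of "real M"] by linarith
  have block: "(\<Sum>j<length Es. tsi_iter m (restr (Es ! j) (U t))) \<le> \<epsilon> / 2 + \<beta> * l1_norm (U t) + first t" for t
    unfolding first_def
    using sum_admissible_tsi_iter_block_le[OF Es U(2,3,4,5) d \<open>0 \<le> \<beta>\<close>] \<open>0 \<le> \<epsilon>\<close> by simp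
  have "(\<Sum>t<M. first t) \<le> 1"
    by (rule sum_over_blocks_le_1[OF a]) (auto simp: first_def split: if_splits)
  have "(\<Sum>j<length Es. tsi_iter m (restr (Es ! j) (\<lambda>i. 1 / real M * (\<Sum>t<M. U t i))))
      \<le> (\<Sum>j<length Es. 1 / real M * (\<Sum>t<M. tsi_iter m (restr (Es ! j) (U t))))"
    unfolding restr_scaled_sum by (intro sum_mono tsi_iter_scaled_sum_le c00_restr U(2)) auto
  also have "\<dots> = 1 / real M * (\<Sum>t<M. \<Sum>j<length Es. tsi_iter m (restr (Es ! j) (U t)))"
    by (subst sum.swap) (simp add: sum_distrib_left)
  also have "\<dots> \<le> 1 / real M * (\<Sum>t<M. \<epsilon> / 2 + \<beta> * l1_norm (U t) + first t)"
    by (intro mult_left_mono sum_mono block) simp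
  also have "\<dots> = \<epsilon> / 2 + \<beta> * l1_norm (\<lambda>i. 1 / real M * (\<Sum>t<M. U t i)) + 1 / real M * (\<Sum>t<M. first t)"
    using M(1) l1_norm_scaled_sum[of "{..<M}" U "1 / real M"] U(1,2)
    by (simp add: sum.distrib sum_distrib_left algebra_simps)
  also have "\<dots> \<le> \<epsilon> / 2 + \<beta> * l1_norm (\<lambda>i. 1 / real M * (\<Sum>t<M. U t i)) + 1 / real M"
    using \<open>(\<Sum>t<M. first t) \<le> 1\<close> by (simp add: divide_right_mono)
  also have "\<dots> \<le> \<epsilon> + \<beta> * l1_norm (\<lambda>i. 1 / real M * (\<Sum>t<M. U t i))"
    using M(2) by simp
  finally show ?thesis .
qed

lemma tsi_dominated_block_average:
  fixes U :: "nat \<Rightarrow> nat \<Rightarrow> real" and a :: "nat \<Rightarrow> nat"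
  assumes M: "0 < M" "1 / real M \<le> \<epsilon> / 2" and a: "strict_mono a"
    and U: "\<And>t i. 0 \<le> U t i" "\<And>t. c00 (U t)" "\<And>t. supp (U t) \<subseteq> {a t..<a (Suc t)}"
      "\<And>t. l1_norm (U t) \<le> 1" "\<And>t. tsi_dominated \<beta> (d t) (U t)"
    and d: "\<And>t. 0 \<le> d t" "\<And>t. real (a t + 1) * d t \<le> \<epsilon> / 2" and "0 \<le> \<beta>"
  shows "tsi_dominated (\<beta> / 2) \<epsilon> (\<lambda>i. 1 / real M * (\<Sum>t<M. U t i))"
  unfolding tsi_dominated_def restr_scaled_sum
proof (intro allI)
  fix m S
  define w where "w = (\<lambda>i. 1 / real M * (\<Sum>t<M. restr S (U t) i))"
  have U_S: "\<And>t i. 0 \<le> restr S (U t) i" "\<And>t. c00 (restr S (U t))"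
    "\<And>t. supp (restr S (U t)) \<subseteq> {a t..<a (Suc t)}" "\<And>t. l1_norm (restr S (U t)) \<le> 1"
    "\<And>t. tsi_dominated \<beta> (d t) (restr S (U t))"
  proof -
    fix t i
    show "0 \<le> restr S (U t) i"
      using U(1) by (simp add: restr_def)
    show "c00 (restr S (U t))"
      by (rule c00_restr[OF U(2)])
    show "supp (restr S (U t)) \<subseteq> {a t..<a (Suc t)}"
      using U(3) by (auto simp: supp_restr)
    show "l1_norm (restr S (U t)) \<le> 1"
      by (rule order_trans[OF l1_norm_restr_le[OF U(2)] U(4)])
    show "tsi_dominated \<beta> (d t) (restr S (U t))"
      by (rule tsi_dominated_restr[OF U(5)])
  qed
  have "0 \<le> \<epsilon>"
    using M(2) zero_le_divide_1_iff[of "real M"] by linarith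
  have "0 \<le> \<beta> / 2 * l1_norm w"
    using \<open>0 \<le> \<beta>\<close> l1_norm_nonneg[of w] by simp
  have "tsi_iter m w \<le> \<epsilon> + \<beta> / 2 * l1_norm w"
  proof (induction m)
    case 0
    then show ?case
      using sup_norm_block_average_le[where U = "\<lambda>t. restr S (U t)", OF a U_S(1-4), of M] M(2) \<open>0 \<le> \<epsilon>\<close> \<open>0 \<le> \<beta> / 2 * l1_norm w\<close>
      unfolding w_def by simp
  next
    case (Suc m)
    show ?case
    proof (rule tsi_iter_Suc_le[OF Suc.IH])
      fix Es assume "admissible Es"
      then show "(\<Sum>j<length Es. tsi_iter m (restr (Es ! j) w)) \<le> 2 * (\<epsilon> + \<beta> / 2 * l1_norm w)"
        using sum_admissible_tsi_iter_block_average_le[where U = "\<lambda>t. restr S (U t)",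
            OF M a U_S d \<open>0 \<le> \<beta>\<close>, of Es m]
          \<open>0 \<le> \<epsilon>\<close> \<open>0 \<le> \<beta> / 2 * l1_norm w\<close>
        unfolding w_def by (cases "Es = []") simp_all
    qed
  qed
  then show "tsi_iter m (\<lambda>i. 1 / real M * (\<Sum>t<M. restr S (U t) i))
      \<le> \<epsilon> + \<beta> / 2 * l1_norm (\<lambda>i. 1 / real M * (\<Sum>t<M. restr S (U t) i))"
    unfolding w_def .
qed

lemma obtain_blocks:
  fixes G :: "nat \<Rightarrow> nat \<Rightarrow> real"
  assumes "\<And>x. supp (G x) \<subseteq> {x..}" "\<And>x. finite (supp (G x))" "\<And>x. supp (G x) \<noteq> {}"
  obtains a where "strict_mono a" "a 0 = q" "\<And>t. supp (G (a t)) \<subseteq> {a t..<a (Suc t)}"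
proof -
  define a where "a = rec_nat q (\<lambda>_ x. Suc (Max (supp (G x))))"
  have blocks: "supp (G (a t)) \<subseteq> {a t..<a (Suc t)}" for t
    using assms(1)[of "a t"] Max_ge[OF assms(2)] by (auto simp: a_def less_Suc_eq_le)
  moreover have "a t < a (Suc t)" for t
    using blocks[of t] assms(3)[of "a t"] by fastforce
  then have "strict_mono a"
    by (simp add: strict_mono_Suc_iff)
  ultimately show ?thesis
    using that by (simp add: a_def)
qed

definition prob_vector_on :: "nat set \<Rightarrow> (nat \<Rightarrow> real) \<Rightarrow> bool" where
  "prob_vector_on A u \<longleftrightarrow> (\<forall>i. 0 \<le> u i) \<and> c00 u \<and> supp u \<subseteq> A \<and> l1_norm u = 1"

lemma exists_tsi_dominated_half:
  assumes IH: "\<And>\<delta> q. 0 < \<delta> \<Longrightarrow> \<exists>u. prob_vector_on (K \<inter> {q..}) u \<and> tsi_dominated \<beta> \<delta> u"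
    and "0 \<le> \<beta>" "0 < \<epsilon>"
  shows "\<exists>w. prob_vector_on (K \<inter> {q..}) w \<and> tsi_dominated (\<beta> / 2) \<epsilon> w"
proof -
  define d where "d x = \<epsilon> / 2 / (real x + 1)" for x :: nat
  have d: "0 < d x" "real (x + 1) * d x \<le> \<epsilon> / 2" for x
    using \<open>0 < \<epsilon>\<close> by (simp_all add: d_def field_simps add_pos_nonneg)
  have "\<forall>x. \<exists>u. prob_vector_on (K \<inter> {x..}) u \<and> tsi_dominated \<beta> (d x) u"
    using IH d(1) by blast
  then obtain G where "\<And>x. prob_vector_on (K \<inter> {x..}) (G x) \<and> tsi_dominated \<beta> (d x) (G x)"
    by metis
  then have G: "\<And>x i. 0 \<le> G x i" "\<And>x. c00 (G x)" "\<And>x. supp (G x) \<subseteq> K \<inter> {x..}"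
    "\<And>x. l1_norm (G x) = 1" "\<And>x. tsi_dominated \<beta> (d x) (G x)"
    by (simp_all add: prob_vector_on_def)
  have "finite (supp (G x))" "supp (G x) \<noteq> {}" for x
    using G(2,4)[of x] by (auto simp: c00_iff_finite_supp l1_norm_def)
  then obtain a where a: "strict_mono a" "a 0 = q" "\<And>t. supp (G (a t)) \<subseteq> {a t..<a (Suc t)}"
    using G(3) obtain_blocks[of G q] by blast
  define M where "M = nat \<lceil>2 / \<epsilon>\<rceil> + 1"
  have "0 < M"
    by (simp add: M_def)
  have "2 / \<epsilon> \<le> real M"
    unfolding M_def by linarith
  then have "1 / real M \<le> \<epsilon> / 2"
    using \<open>0 < \<epsilon>\<close> \<open>0 < M\<close> by (simp add: field_simps)
  define w where "w i = 1 / real M * (\<Sum>t<M. G (a t) i)" for i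
  have "tsi_dominated (\<beta> / 2) \<epsilon> w"
    unfolding w_def using \<open>0 < M\<close> \<open>1 / real M \<le> \<epsilon> / 2\<close> a(1,3) G d \<open>0 \<le> \<beta>\<close>
    by (intro tsi_dominated_block_average[where d = "\<lambda>t. d (a t)"]) (auto intro: less_imp_le)
  moreover have "supp w \<subseteq> K \<inter> {q..}"
  proof -
    have "supp (G (a t)) \<subseteq> K \<inter> {q..}" for t
      using G(3)[of "a t"] a strict_mono_less_eq[OF a(1), of 0 t] by auto
    then show ?thesis
      unfolding w_def using supp_scaled_sum_subset by fastforce
  qed
  moreover have "l1_norm w = 1"
    unfolding w_def using \<open>0 < M\<close> G by (subst l1_norm_scaled_sum) auto
  moreover have "\<forall>i. 0 \<le> w i"
    unfolding w_def using G(1) by (simp add: sum_nonneg)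
  moreover have "c00 w"
    unfolding w_def using G(2) by (intro c00_mult c00_sum) auto
  ultimately show ?thesis
    unfolding prob_vector_on_def by blast
qed

lemma exists_tsi_dominated:
  assumes "infinite K" "0 < \<epsilon>"
  shows "\<exists>u. prob_vector_on (K \<inter> {q..}) u \<and> tsi_dominated (1 / 2 ^ r) \<epsilon> u"
  using assms(2)
proof (induction r arbitrary: \<epsilon> q)
  case 0
  obtain p where "p \<in> K" "q \<le> p"
    using assms(1) by (meson infinite_nat_iff_unbounded_le)
  define u where "u i = (if i = p then 1 else 0 :: real)" for i
  have "supp u = {p}"
    by (auto simp: u_def supp_def)
  then have "prob_vector_on (K \<inter> {q..}) u"
    using \<open>p \<in> K\<close> \<open>q \<le> p\<close> by (simp add: prob_vector_on_def c00_iff_finite_supp l1_norm_def u_def)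
  moreover have "tsi_iter m (restr S u) \<le> \<epsilon> + 1 * l1_norm (restr S u)" for m S
    using tsi_iter_le_l1_norm[OF c00_restr, of u m S] \<open>prob_vector_on _ u\<close> 0
    by (simp add: prob_vector_on_def)
  ultimately show ?case
    unfolding tsi_dominated_def by simp blast
next
  case (Suc r)
  then show ?case
    using exists_tsi_dominated_half[of K "1 / 2 ^ r"] by (simp add: mult.commute)
qed

lemma exists_tsi_norm_le_1_l1_norm_gt:
  assumes "infinite K"
  shows "\<exists>y. (\<forall>i. 0 \<le> y i) \<and> c00 y \<and> supp y \<subseteq> K \<and> tsi_norm y \<le> 1 \<and> c < l1_norm y"
proof -
  define C where "C = \<bar>c\<bar> + 1"
  have "0 < C" "c < C"
    by (simp_all add: C_def)
  obtain r where r: "2 * C < 2 ^ r"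
    using real_arch_pow[of 2 "2 * C"] by auto
  obtain u where u: "\<forall>i. 0 \<le> u i" "c00 u" "supp u \<subseteq> K" "l1_norm u = 1"
    "tsi_dominated (1 / 2 ^ r) (1 / (2 * C)) u"
    using exists_tsi_dominated[OF assms, of "1 / (2 * C)" 0 r] \<open>0 < C\<close>
    by (auto simp: prob_vector_on_def)
  have "tsi_iter m u \<le> 1 / C" for m
  proof -
    have "tsi_iter m u \<le> 1 / (2 * C) + 1 / 2 ^ r"
      using u(5)[unfolded tsi_dominated_def, rule_format, of m UNIV] u(4) by (simp add: restr_def)
    also have "1 / 2 ^ r \<le> 1 / (2 * C)"
      using r \<open>0 < C\<close> by (simp add: frac_le)
    finally show ?thesis
      by simp
  qed
  define y where "y i = C * u i" for i
  have "tsi_iter m y \<le> 1" for m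
  proof -
    have "tsi_iter m y \<le> C * tsi_iter m u"
      unfolding y_def using \<open>0 < C\<close> u(2) by (intro tsi_iter_scale_le) auto
    also have "\<dots> \<le> C * (1 / C)"
      using \<open>tsi_iter m u \<le> 1 / C\<close> \<open>0 < C\<close> by (intro mult_left_mono) auto
    finally show ?thesis
      using \<open>0 < C\<close> by simp
  qed
  moreover have "l1_norm y = C"
    unfolding y_def l1_norm_mult using u(4) \<open>0 < C\<close> by simp
  moreover have "supp y = supp u"
    using \<open>0 < C\<close> by (simp add: y_def supp_def)
  moreover have "c00 y" "\<forall>i. 0 \<le> y i"
    unfolding y_def using u(1) \<open>0 < C\<close> by (simp_all add: c00_mult[OF u(2)])
  ultimately show ?thesis
    using u(3) \<open>c < C\<close> by (intro exI[of _ y]) (auto intro: tsi_norm_le)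
qed

section \<open>The dual norm\<close>

lemma pairing_le_l1_norm:
  assumes "c00 b" "c00 x" "tsi_norm x \<le> 1"
  shows "(\<Sum>i \<in> {i. x i \<noteq> 0}. b i * x i) \<le> l1_norm b"
proof -
  define D where "D = {i. x i \<noteq> 0} \<union> supp b"
  have "finite D"
    using assms(1,2) by (simp add: D_def c00_iff_finite_supp supp_def)
  have "b i * x i \<le> \<bar>b i\<bar>" for i
    using abs_le_tsi_norm[OF assms(2), of i] assms(3)
    by (metis abs_ge_self abs_mult abs_ge_zero mult_left_le order_trans)
  then have "(\<Sum>i \<in> {i. x i \<noteq> 0}. b i * x i) \<le> (\<Sum>i \<in> {i. x i \<noteq> 0}. \<bar>b i\<bar>)"
    by (intro sum_mono)
  also have "\<dots> \<le> (\<Sum>i\<in>D. \<bar>b i\<bar>)"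
    using \<open>finite D\<close> by (intro sum_mono2) (auto simp: D_def)
  also have "\<dots> = l1_norm b"
    using l1_norm_superset[OF \<open>finite D\<close>, of b] by (simp add: D_def)
  finally show ?thesis .
qed

lemma tstar_norm_ge:
  "c00 b \<Longrightarrow> c00 x \<Longrightarrow> tsi_norm x \<le> 1 \<Longrightarrow> (\<Sum>i \<in> {i. x i \<noteq> 0}. b i * x i) \<le> tstar_norm b"
  unfolding tstar_norm_def
  by (rule cSup_upper) (auto intro: bdd_aboveI[of _ "l1_norm b"] pairing_le_l1_norm)

lemma tstar_norm_le:
  "(\<And>x. c00 x \<Longrightarrow> tsi_norm x \<le> 1 \<Longrightarrow> (\<Sum>i \<in> {i. x i \<noteq> 0}. b i * x i) \<le> B) \<Longrightarrow> tstar_norm b \<le> B"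
  unfolding tstar_norm_def
  by (rule cSup_least) (auto intro!: exI[of _ "\<lambda>i. 0"] simp: c00_zero tsi_norm_zero)

lemma tstar_norm_nonneg: "c00 b \<Longrightarrow> 0 \<le> tstar_norm b"
  using tstar_norm_ge[OF _ c00_zero, of b] by (simp add: tsi_norm_zero)

lemma tstar_norm_zero: "tstar_norm (\<lambda>i. 0) = 0"
  using tstar_norm_nonneg[OF c00_zero] tstar_norm_le[of "\<lambda>i. 0" 0] by simp

lemma tstar_norm_mono:
  assumes "c00 b'" "\<And>i. 0 \<le> b i" "\<And>i. b i \<le> b' i"
  shows "tstar_norm b \<le> tstar_norm b'"
proof (rule tstar_norm_le)
  fix x assume x: "c00 x" "tsi_norm x \<le> 1"
  have "b i * x i \<le> b' i * \<bar>x i\<bar>" for i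
    using assms(2,3)[of i] by (metis abs_ge_self abs_ge_zero mult_left_mono mult_right_mono order_trans)
  then have "(\<Sum>i \<in> {i. x i \<noteq> 0}. b i * x i) \<le> (\<Sum>i \<in> {i. \<bar>x i\<bar> \<noteq> 0}. b' i * \<bar>x i\<bar>)"
    by (simp add: sum_mono)
  also have "\<dots> \<le> tstar_norm b'"
    using x by (intro tstar_norm_ge assms(1) c00_abs) (simp_all add: tsi_norm_abs)
  finally show "(\<Sum>i \<in> {i. x i \<noteq> 0}. b i * x i) \<le> tstar_norm b'" .
qed

lemma tstar_norm_add_le:
  assumes "c00 b" "c00 b'"
  shows "tstar_norm (\<lambda>i. b i + b' i) \<le> tstar_norm b + tstar_norm b'"
proof (rule tstar_norm_le)
  fix x assume "c00 x" "tsi_norm x \<le> 1"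
  then show "(\<Sum>i \<in> {i. x i \<noteq> 0}. (b i + b' i) * x i) \<le> tstar_norm b + tstar_norm b'"
    using tstar_norm_ge[OF assms(1)] tstar_norm_ge[OF assms(2)]
    by (simp add: distrib_right sum.distrib add_mono)
qed

lemma tstar_norm_scale_le:
  assumes "0 \<le> c" "c00 b"
  shows "tstar_norm (\<lambda>i. c * b i) \<le> c * tstar_norm b"
proof (rule tstar_norm_le)
  fix x assume "c00 x" "tsi_norm x \<le> 1"
  then show "(\<Sum>i \<in> {i. x i \<noteq> 0}. c * b i * x i) \<le> c * tstar_norm b"
    using mult_left_mono[OF tstar_norm_ge[OF assms(2)] assms(1)]
    by (simp add: sum_distrib_left mult.assoc)
qed

lemma tstar_norm_scale:
  assumes "0 \<le> c" "c00 b"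
  shows "tstar_norm (\<lambda>i. c * b i) = c * tstar_norm b"
proof (cases "c = 0")
  case True
  then show ?thesis by (simp add: tstar_norm_zero)
next
  case False
  then have "tstar_norm b \<le> 1 / c * tstar_norm (\<lambda>i. c * b i)"
    using tstar_norm_scale_le[of "1 / c" "\<lambda>i. c * b i"] assms by (simp add: c00_mult)
  then show ?thesis
    using tstar_norm_scale_le[OF assms] assms(1) False by (simp add: field_simps)
qed

lemma tstar_norm_unit: "tstar_norm (\<lambda>i. if i = p then 1 else 0) = 1"
proof (rule antisym)
  show "tstar_norm (\<lambda>i. if i = p then 1 else 0) \<le> 1"
  proof (rule tstar_norm_le)
    fix x assume x: "c00 x" "tsi_norm x \<le> 1"
    have "(\<Sum>i \<in> {i. x i \<noteq> 0}. (if i = p then 1 else 0) * x i) = (\<Sum>i \<in> {i. x i \<noteq> 0}. if i = p then x i else 0)"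
      by (intro sum.cong) auto
    also have "\<dots> = (if x p \<noteq> 0 then x p else 0)"
      using x(1) unfolding c00_def by simp
    finally show "(\<Sum>i \<in> {i. x i \<noteq> 0}. (if i = p then 1 else 0) * x i) \<le> 1"
      using abs_le_tsi_norm[OF x(1), of p] x(2) by auto
  qed
  have "c00 (\<lambda>i. if i = p then 1 else 0 :: real)" "tsi_norm (\<lambda>i. if i = p then 1 else 0) \<le> 1"
    using tsi_iter_le_l1_norm[of "\<lambda>i. if i = p then 1 else 0"]
    by (auto simp: c00_def l1_norm_def supp_def intro!: tsi_norm_le)
  from tstar_norm_ge[OF this(1) this]
  show "1 \<le> tstar_norm (\<lambda>i. if i = p then 1 else 0)"
    by (simp add: if_distrib cong: if_cong)
qed

lemma tstar_norm_pos:
  assumes "c00 b" "\<And>i. 0 \<le> b i" "0 < b p"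
  shows "0 < tstar_norm b"
proof -
  have "tstar_norm (\<lambda>i. b p * (if i = p then 1 else 0)) \<le> tstar_norm b"
    using assms by (intro tstar_norm_mono) auto
  then show ?thesis
    using tstar_norm_scale[of "b p" "\<lambda>i. if i = p then 1 else 0"] assms(3)
    by (simp add: tstar_norm_unit c00_def)
qed

section \<open>Asymptotic structure of the sum\<close>

lemma card_le_of_family_independent:
  fixes v :: "'b \<Rightarrow> 'a::real_vector"
  assumes "finite B" "finite F" "\<And>b. b \<in> B \<Longrightarrow> v b \<in> span F"
    and indep: "\<And>c. (\<Sum>b\<in>B. c b *\<^sub>R v b) = 0 \<Longrightarrow> \<forall>b\<in>B. c b = 0"
  shows "card B \<le> card F"
proof -
  have "inj_on v B"
  proof (rule inj_onI, rule ccontr)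
    fix b1 b2 assume b: "b1 \<in> B" "b2 \<in> B" "v b1 = v b2" "b1 \<noteq> b2"
    define c where "c b = (if b = b1 then 1 else 0) - (if b = b2 then 1 else 0 :: real)" for b
    have "(\<Sum>b\<in>B. c b *\<^sub>R v b) = (\<Sum>b\<in>B. (if b = b1 then v b else 0) - (if b = b2 then v b else 0))"
      by (intro sum.cong) (auto simp: c_def)
    also have "\<dots> = v b1 - v b2"
      using b assms(1) by (simp add: sum_subtractf)
    finally have "(\<Sum>b\<in>B. c b *\<^sub>R v b) = 0"
      using b(3) by simp
    then have "c b1 = 0"
      using indep b(1) by blast
    then show False
      using b(4) by (simp add: c_def)
  qed
  moreover have "independent (v ` B)"
  proof
    assume "dependent (v ` B)"
    then obtain u where u: "\<exists>w\<in>v ` B. u w \<noteq> 0" "(\<Sum>w\<in>v ` B. u w *\<^sub>R w) = 0"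
      using dependent_finite[of "v ` B"] assms(1) by auto
    then have "(\<Sum>b\<in>B. u (v b) *\<^sub>R v b) = 0"
      by (simp add: sum.reindex[OF \<open>inj_on v B\<close>])
    with u(1) indep[of "\<lambda>b. u (v b)"] show False
      by auto
  qed
  ultimately show ?thesis
    using independent_span_bound[OF assms(2), of "v ` B"] assms(3) card_image by fastforce
qed

lemma infinite_dimensional_meets_fin_codim:
  fixes L :: "'a::real_vector \<Rightarrow> 'b::real_vector"
  assumes "linear L" "subspace Y" "infinite_dimensional Y" "subspace W" "finite F"
    and cover: "L ` Y \<subseteq> {w + f | w f. w \<in> W \<and> f \<in> span F}"
  shows "\<exists>u\<in>Y. u \<noteq> 0 \<and> L u \<in> W"
proof (rule ccontr)
  assume no_u: "\<not> ?thesis"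
  obtain Bm where Bm: "Bm \<subseteq> Y" "independent Bm" "Y \<subseteq> span Bm"
    by (rule maximal_independent_subset)
  then have "infinite Bm"
    using assms(3) unfolding infinite_dimensional_def by blast
  then obtain B where B: "finite B" "card B = Suc (card F)" "B \<subseteq> Bm"
    using infinite_arbitrarily_large by blast
  have "\<forall>b\<in>B. \<exists>w f. L b = w + f \<and> w \<in> W \<and> f \<in> span F"
    using cover B(3) Bm(1) by blast
  then obtain w f where wf: "\<And>b. b \<in> B \<Longrightarrow> L b = w b + f b \<and> w b \<in> W \<and> f b \<in> span F"
    by metis
  have "card B \<le> card F"
  proof (rule card_le_of_family_independent[OF B(1) assms(5)])
    fix c assume "(\<Sum>b\<in>B. c b *\<^sub>R f b) = 0"
    then have "L (\<Sum>b\<in>B. c b *\<^sub>R b) = (\<Sum>b\<in>B. c b *\<^sub>R w b)"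
      using wf by (simp add: linear_sum[OF assms(1)] linear_scale[OF assms(1)] scaleR_add_right sum.distrib)
    then have "L (\<Sum>b\<in>B. c b *\<^sub>R b) \<in> W"
      using wf assms(4) by (auto intro!: subspace_sum subspace_scale)
    moreover have "(\<Sum>b\<in>B. c b *\<^sub>R b) \<in> Y"
      using B(3) Bm(1) assms(2) by (auto intro!: subspace_sum subspace_scale)
    ultimately have "(\<Sum>b\<in>B. c b *\<^sub>R b) = 0"
      using no_u by blast
    then show "\<forall>b\<in>B. c b = 0"
      using independent_mono[OF Bm(2) B(3)] B(1) dependent_finite by blast
  qed (use wf in blast)
  then show False
    using B(2) by simp
qed

definition single_seq :: "nat \<Rightarrow> 'a::real_vector \<Rightarrow> nat \<Rightarrow> 'a" where
  "single_seq k u = (\<lambda>i. if i = k then u else 0)"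

lemma linear_single_seq: "linear (single_seq k)"
  by (rule linearI) (auto simp: single_seq_def plus_fun_def scaleR_fun_def)

lemma single_seq_in_tstar_sum:
  assumes "\<And>k. subspace (X k)" "u \<in> X k"
  shows "single_seq k u \<in> tstar_sum X"
proof -
  have "single_seq k u i \<in> X i" for i
    using assms by (simp add: single_seq_def subspace_0)
  moreover have "tstar_convergent (\<lambda>i. norm (single_seq k u i))"
    unfolding tstar_convergent_def
  proof (intro allI impI exI[of _ "Suc k"])
    fix e :: real and m n assume "0 < e" "Suc k \<le> m"
    then have "(\<lambda>i. if m \<le> i \<and> i < n then norm (single_seq k u i) else 0) = (\<lambda>i. 0)"
      by (auto simp: single_seq_def)
    then show "tstar_norm (\<lambda>i. if m \<le> i \<and> i < n then norm (single_seq k u i) else 0) < e"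
      using \<open>0 < e\<close> by (simp add: tstar_norm_zero)
  qed
  ultimately show ?thesis
    by (simp add: tstar_sum_def)
qed

lemma tstar_sum_norm_single_seq: "tstar_sum_norm (single_seq k u) = norm u"
proof -
  have "(\<lambda>i. norm (single_seq k u i)) = (\<lambda>i. norm u * (if i = k then 1 else 0))"
    by (auto simp: single_seq_def)
  then show ?thesis
    using tstar_norm_scale[of "norm u" "\<lambda>i. if i = k then 1 else 0"]
    by (simp add: tstar_sum_norm_def tstar_norm_unit c00_def)
qed

definition subseq_coeffs :: "(nat \<Rightarrow> nat) \<Rightarrow> nat \<Rightarrow> (nat \<Rightarrow> real) \<Rightarrow> nat \<Rightarrow> real" where
  "subseq_coeffs kk n a = (\<lambda>i. \<Sum>j<n. if i = kk j then \<bar>a j\<bar> else 0)"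

definition tstar_subseq_norm :: "(nat \<Rightarrow> nat) \<Rightarrow> nat \<Rightarrow> (nat \<Rightarrow> real) \<Rightarrow> real" where
  "tstar_subseq_norm kk n a = tstar_norm (subseq_coeffs kk n a)"

lemma subseq_coeffs_at:
  assumes "strict_mono kk" "j < n"
  shows "subseq_coeffs kk n a (kk j) = \<bar>a j\<bar>"
proof -
  have "subseq_coeffs kk n a (kk j) = (\<Sum>j'<n. if j' = j then \<bar>a j'\<bar> else 0)"
    unfolding subseq_coeffs_def by (intro sum.cong) (auto simp: strict_mono_eq[OF assms(1)])
  then show ?thesis
    using assms(2) by simp
qed

lemma subseq_coeffs_outside: "i \<notin> kk ` {..<n} \<Longrightarrow> subseq_coeffs kk n a i = 0"
  unfolding subseq_coeffs_def by (rule sum.neutral) auto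

lemma subseq_coeffs_nonneg: "0 \<le> subseq_coeffs kk n a i"
  unfolding subseq_coeffs_def by (simp add: sum_nonneg)

lemma c00_subseq_coeffs: "c00 (subseq_coeffs kk n a)"
proof -
  have "{i. subseq_coeffs kk n a i \<noteq> 0} \<subseteq> kk ` {..<n}"
    using subseq_coeffs_outside by blast
  then show ?thesis
    unfolding c00_def by (rule finite_subset) simp
qed

lemma tstar_subseq_norm_mono:
  assumes "\<And>j. j < n \<Longrightarrow> \<bar>a j\<bar> \<le> \<bar>b j\<bar>"
  shows "tstar_subseq_norm kk n a \<le> tstar_subseq_norm kk n b"
proof -
  have "subseq_coeffs kk n a i \<le> subseq_coeffs kk n b i" for i
    unfolding subseq_coeffs_def using assms by (intro sum_mono) simp
  then show ?thesis
    unfolding tstar_subseq_norm_def by (rule tstar_norm_mono[OF c00_subseq_coeffs subseq_coeffs_nonneg])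
qed

lemma tstar_subseq_norm_add_le:
  "tstar_subseq_norm kk n (\<lambda>j. a j + b j) \<le> tstar_subseq_norm kk n a + tstar_subseq_norm kk n b"
proof -
  have "subseq_coeffs kk n (\<lambda>j. a j + b j) i \<le> subseq_coeffs kk n a i + subseq_coeffs kk n b i" for i
    unfolding subseq_coeffs_def sum.distrib[symmetric] by (intro sum_mono) (simp add: abs_triangle_ineq)
  then have "tstar_subseq_norm kk n (\<lambda>j. a j + b j)
      \<le> tstar_norm (\<lambda>i. subseq_coeffs kk n a i + subseq_coeffs kk n b i)"
    unfolding tstar_subseq_norm_def by (intro tstar_norm_mono c00_add c00_subseq_coeffs subseq_coeffs_nonneg)
  also have "\<dots> \<le> tstar_subseq_norm kk n a + tstar_subseq_norm kk n b"
    unfolding tstar_subseq_norm_def by (intro tstar_norm_add_le c00_subseq_coeffs)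
  finally show ?thesis .
qed

lemma tstar_subseq_norm_eq_0_iff:
  assumes "strict_mono kk"
  shows "tstar_subseq_norm kk n a = 0 \<longleftrightarrow> (\<forall>j<n. a j = 0)"
proof
  assume "tstar_subseq_norm kk n a = 0"
  show "\<forall>j<n. a j = 0"
  proof (intro allI impI, rule ccontr)
    fix j assume "j < n" "a j \<noteq> 0"
    then have "0 < subseq_coeffs kk n a (kk j)"
      using subseq_coeffs_at[OF assms] by simp
    then have "0 < tstar_subseq_norm kk n a"
      unfolding tstar_subseq_norm_def by (rule tstar_norm_pos[OF c00_subseq_coeffs subseq_coeffs_nonneg])
    with \<open>tstar_subseq_norm kk n a = 0\<close> show False
      by simp
  qed
next
  assume "\<forall>j<n. a j = 0"
  then have "subseq_coeffs kk n a = (\<lambda>i. 0)"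
    unfolding subseq_coeffs_def by (auto intro!: sum.neutral)
  then show "tstar_subseq_norm kk n a = 0"
    by (simp add: tstar_subseq_norm_def tstar_norm_zero)
qed

lemma nm_norm_tstar_subseq_norm:
  assumes "strict_mono kk"
  shows "nm_norm n (tstar_subseq_norm kk n)"
  unfolding nm_norm_def
proof (intro conjI allI impI)
  fix a
  show "tstar_subseq_norm kk n a = tstar_subseq_norm kk n (\<lambda>i. if i < n then a i else 0)"
    unfolding tstar_subseq_norm_def subseq_coeffs_def by (simp cong: if_cong)
next
  fix a
  show "tstar_subseq_norm kk n a = 0 \<longleftrightarrow> (\<forall>j<n. a j = 0)"
    by (rule tstar_subseq_norm_eq_0_iff[OF assms])
next
  fix a b
  show "tstar_subseq_norm kk n (\<lambda>j. a j + b j) \<le> tstar_subseq_norm kk n a + tstar_subseq_norm kk n b"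
    by (rule tstar_subseq_norm_add_le)
next
  fix c a
  have "subseq_coeffs kk n (\<lambda>i. c * a i) = (\<lambda>i. \<bar>c\<bar> * subseq_coeffs kk n a i)"
    unfolding subseq_coeffs_def sum_distrib_left by (intro ext sum.cong) (auto simp: abs_mult)
  then show "tstar_subseq_norm kk n (\<lambda>i. c * a i) = \<bar>c\<bar> * tstar_subseq_norm kk n a"
    by (simp add: tstar_subseq_norm_def tstar_norm_scale c00_subseq_coeffs)
next
  fix j assume "j < n"
  have "subseq_coeffs kk n (\<lambda>j'. if j' = j then 1 else 0) i = (if i = kk j then 1 else 0)" for i
  proof -
    have "subseq_coeffs kk n (\<lambda>j'. if j' = j then 1 else 0) i
        = (\<Sum>j'<n. if j' = j then (if i = kk j then 1 else 0) else 0)"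
      unfolding subseq_coeffs_def by (intro sum.cong) auto
    then show ?thesis
      using \<open>j < n\<close> by simp
  qed
  then show "tstar_subseq_norm kk n (\<lambda>j'. if j' = j then 1 else 0) = 1"
    unfolding tstar_subseq_norm_def using tstar_norm_unit[of "kk j"] by presburger
next
  fix a m
  show "tstar_subseq_norm kk n (\<lambda>i. if i < m then a i else 0) \<le> tstar_subseq_norm kk n a"
    by (rule tstar_subseq_norm_mono) simp
qed

lemma sum_fun_apply: "(\<Sum>j\<in>T. f j) i = (\<Sum>j\<in>T. f j i)"
  by (induction T rule: infinite_finite_induct) auto

lemma tstar_sum_norm_combination:
  assumes "strict_mono kk" "\<And>j. j < n \<Longrightarrow> norm (us j) = 1"
  shows "tstar_sum_norm (\<Sum>j<n. a j *\<^sub>R single_seq (kk j) (us j)) = tstar_subseq_norm kk n a"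
proof -
  have "norm ((\<Sum>j<n. a j *\<^sub>R single_seq (kk j) (us j)) i) = subseq_coeffs kk n a i" for i
  proof -
    have sum_at: "(\<Sum>j<n. a j *\<^sub>R single_seq (kk j) (us j)) i = (\<Sum>j<n. a j *\<^sub>R single_seq (kk j) (us j) i)"
      by (simp add: sum_fun_apply scaleR_fun_def)
    show ?thesis
    proof (cases "i \<in> kk ` {..<n}")
      case True
      then obtain j where j: "j < n" "i = kk j"
        by auto
      have "(\<Sum>j'<n. a j' *\<^sub>R single_seq (kk j') (us j') i) = (\<Sum>j'<n. if j' = j then a j' *\<^sub>R us j' else 0)"
        using strict_mono_eq[OF assms(1)] j(2) by (intro sum.cong) (auto simp: single_seq_def)
      then show ?thesis
        unfolding sum_at using j subseq_coeffs_at[OF assms(1) j(1)] assms(2) by simp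
    next
      case False
      then have "(\<Sum>j'<n. a j' *\<^sub>R single_seq (kk j') (us j') i) = 0"
        by (intro sum.neutral) (auto simp: single_seq_def)
      then show ?thesis
        unfolding sum_at using subseq_coeffs_outside[OF False] by simp
    qed
  qed
  then show ?thesis
    by (simp add: tstar_sum_norm_def tstar_subseq_norm_def)
qed

lemma asym_game_single_seqs:
  fixes X :: "nat \<Rightarrow> 'a::real_normed_vector set"
  assumes X: "\<And>k. subspace (X k)" "\<And>j. infinite_dimensional (X (kk j))"
    and "strict_mono kk" "0 \<le> \<epsilon>"
  shows "l + r = n \<Longrightarrow> (\<And>j. j < l \<Longrightarrow> us j \<in> X (kk j) \<and> norm (us j) = 1) \<Longrightarrow>
    asym_game (tstar_sum X) tstar_sum_norm (tstar_subseq_norm kk n) \<epsilon> r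
      (map (\<lambda>j. single_seq (kk j) (us j)) [0..<l])"
proof (induction r arbitrary: l us)
  case 0
  have "(\<Sum>j<length (map (\<lambda>j. single_seq (kk j) (us j)) [0..<l]).
      a j *\<^sub>R map (\<lambda>j. single_seq (kk j) (us j)) [0..<l] ! j)
      = (\<Sum>j<n. a j *\<^sub>R single_seq (kk j) (us j))" for a
    using 0 by (intro sum.cong) auto
  moreover have "tstar_sum_norm (\<Sum>j<n. a j *\<^sub>R single_seq (kk j) (us j)) = tstar_subseq_norm kk n a" for a
    using tstar_sum_norm_combination[OF \<open>strict_mono kk\<close>, of n us a] 0 by auto
  ultimately show ?case
    unfolding asym_game.simps equiv_to_basis_def using \<open>0 \<le> \<epsilon>\<close> by (intro exI[of _ 1]) simp
next
  case (Suc r)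
  show ?case
    unfolding asym_game.simps
  proof (intro allI impI)
    fix W assume "fin_codim_closed (tstar_sum X) tstar_sum_norm W"
    then obtain F where W: "subspace W" "finite F"
      and F: "tstar_sum X \<subseteq> {w + f | w f. w \<in> W \<and> f \<in> span F}"
      unfolding fin_codim_closed_def by blast
    have "single_seq (kk l) ` X (kk l) \<subseteq> {w + f | w f. w \<in> W \<and> f \<in> span F}"
      using F single_seq_in_tstar_sum[of X, OF X(1)] by blast
    then obtain u0 where u0: "u0 \<in> X (kk l)" "u0 \<noteq> 0" "single_seq (kk l) u0 \<in> W"
      using infinite_dimensional_meets_fin_codim[OF linear_single_seq X(1) X(2) W] by blast
    define u where "u = (1 / norm u0) *\<^sub>R u0"
    have "single_seq (kk l) u = (1 / norm u0) *\<^sub>R single_seq (kk l) u0"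
      unfolding u_def by (rule linear_scale[OF linear_single_seq])
    then have u: "u \<in> X (kk l)" "norm u = 1" "single_seq (kk l) u \<in> W"
      using u0 X(1) W(1) by (simp_all add: u_def subspace_scale)
    have "map (\<lambda>j. single_seq (kk j) ((us(l := u)) j)) [0..<Suc l]
        = map (\<lambda>j. single_seq (kk j) (us j)) [0..<l] @ [single_seq (kk l) u]"
      by simp
    moreover have "asym_game (tstar_sum X) tstar_sum_norm (tstar_subseq_norm kk n) \<epsilon> r
        (map (\<lambda>j. single_seq (kk j) ((us(l := u)) j)) [0..<Suc l])"
      using Suc.prems u(1,2) by (intro Suc.IH) (auto simp: less_Suc_eq)
    ultimately have "asym_game (tstar_sum X) tstar_sum_norm (tstar_subseq_norm kk n) \<epsilon> r
        (map (\<lambda>j. single_seq (kk j) (us j)) [0..<l] @ [single_seq (kk l) u])"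
      by (simp only:)
    then show "\<exists>x\<in>W. tstar_sum_norm x = 1 \<and> asym_game (tstar_sum X) tstar_sum_norm
        (tstar_subseq_norm kk n) \<epsilon> r (map (\<lambda>j. single_seq (kk j) (us j)) [0..<l] @ [x])"
      using u(2,3) tstar_sum_norm_single_seq[of "kk l" u] by auto
  qed
qed

lemma tstar_subseq_norm_in_asym_struct:
  fixes X :: "nat \<Rightarrow> 'a::real_normed_vector set"
  assumes "\<And>k. subspace (X k)" "\<And>j. infinite_dimensional (X (kk j))" "strict_mono kk"
  shows "tstar_subseq_norm kk n \<in> asym_struct (tstar_sum X) tstar_sum_norm n"
  unfolding asym_struct_def
proof (intro CollectI conjI allI impI)
  show "nm_norm n (tstar_subseq_norm kk n)"
    by (rule nm_norm_tstar_subseq_norm[OF assms(3)])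
  fix \<epsilon> :: real assume "0 < \<epsilon>"
  then show "asym_game (tstar_sum X) tstar_sum_norm (tstar_subseq_norm kk n) \<epsilon> n []"
    using asym_game_single_seqs[where X = X and kk = kk and \<epsilon> = \<epsilon> and l = 0 and r = n and n = n] assms
    by simp
qed

lemma nm_norm_ones_le_of_linf_equiv:
  assumes "nm_norm n E" "0 < n" "0 < A" "A * B \<le> c"
    and equiv: "\<And>a. 1 / A * E a \<le> linf_norm n a \<and> linf_norm n a \<le> B * E a"
  shows "E (\<lambda>_. 1) \<le> c"
proof -
  have "linf_norm n (\<lambda>_. 1) = 1"
    unfolding linf_norm_def by (rule Max_eqI) (use assms(2) in auto)
  moreover have "linf_norm n (\<lambda>j. if j = 0 then 1 else 0) = 1"
    unfolding linf_norm_def by (rule Max_eqI) (use assms(2) in \<open>auto intro!: image_eqI[where x = 0]\<close>)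
  moreover have "E (\<lambda>j. if j = 0 then 1 else 0) = 1"
    using assms(1,2) unfolding nm_norm_def by blast
  ultimately have "E (\<lambda>_. 1) \<le> A" "1 \<le> B"
    using equiv[of "\<lambda>_. 1"] equiv[of "\<lambda>j. if j = 0 then 1 else 0"] assms(3)
    by (simp_all add: field_simps)
  then show ?thesis
    using assms(3,4) mult_left_mono[of 1 B A] by linarith
qed

lemma l1_norm_le_tstar_subseq_norm_ones:
  assumes "strict_mono kk" "\<forall>i. 0 \<le> y i" "c00 y" "tsi_norm y \<le> 1" "supp y \<subseteq> kk ` {..<n}"
  shows "l1_norm y \<le> tstar_subseq_norm kk n (\<lambda>_. 1)"
proof -
  have "subseq_coeffs kk n (\<lambda>_. 1) i = 1" if i: "i \<in> supp y" for i
  proof -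
    obtain j where "j < n" "i = kk j"
      using assms(5) i by blast
    then show ?thesis
      using subseq_coeffs_at[OF assms(1), of j n "\<lambda>_. 1"] by simp
  qed
  then have "l1_norm y = (\<Sum>i \<in> {i. y i \<noteq> 0}. subseq_coeffs kk n (\<lambda>_. 1) i * y i)"
    unfolding l1_norm_def using assms(2) by (intro sum.cong) (auto simp: supp_def)
  also have "\<dots> \<le> tstar_subseq_norm kk n (\<lambda>_. 1)"
    unfolding tstar_subseq_norm_def by (rule tstar_norm_ge[OF c00_subseq_coeffs assms(3,4)])
  finally show ?thesis .
qed

lemma finite_subset_range_prefix:
  fixes f :: "nat \<Rightarrow> 'a"
  assumes "finite S" "S \<subseteq> range f"
  shows "\<exists>n>0. S \<subseteq> f ` {..<n}"
proof -
  obtain C where "finite C" "S = f ` C"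
    using finite_subset_image[OF assms] by blast
  moreover have "C \<subseteq> {..<Suc (Max (insert 0 C))}"
    using \<open>finite C\<close> by (auto simp: less_Suc_eq_le)
  ultimately show ?thesis
    using zero_less_Suc by (blast dest: image_mono)
qed

theorem lemma2p7:
  fixes X :: "nat \<Rightarrow> 'a::banach set"
  assumes "\<And>k. subspace (X k)"
    and "\<And>k. closed (X k)"
    and "infinite {k. infinite_dimensional (X k)}"
  shows "\<not> asymptotic_c0 (tstar_sum X) tstar_sum_norm"
proof
  assume "asymptotic_c0 (tstar_sum X) tstar_sum_norm"
  then obtain c where c: "\<And>n E. E \<in> asym_struct (tstar_sum X) tstar_sum_norm n \<Longrightarrow>
      \<exists>A B. 0 < A \<and> 0 < B \<and> A * B \<le> c \<and> (\<forall>a. 1 / A * E a \<le> linf_norm n a \<and> linf_norm n a \<le> B * E a)"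
    unfolding asymptotic_c0_def by blast
  define kk where "kk = enumerate {k. infinite_dimensional (X k)}"
  have kk: "strict_mono kk" "range kk = {k. infinite_dimensional (X k)}"
    using assms(3) by (simp_all add: kk_def strict_mono_enumerate range_enumerate)
  obtain y where y: "\<forall>i. 0 \<le> y i" "c00 y" "supp y \<subseteq> range kk" "tsi_norm y \<le> 1" "c < l1_norm y"
    using exists_tsi_norm_le_1_l1_norm_gt[OF assms(3), of c] kk(2) by auto
  obtain n where n: "0 < n" "supp y \<subseteq> kk ` {..<n}"
    using finite_subset_range_prefix[OF _ y(3)] y(2) unfolding c00_iff_finite_supp by blast
  have "infinite_dimensional (X (kk j))" for j
    using kk(2) by blast
  then obtain A B where AB: "0 < A" "A * B \<le> c"
    "\<And>a. 1 / A * tstar_subseq_norm kk n a \<le> linf_norm n a \<and> linf_norm n a \<le> B * tstar_subseq_norm kk n a"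
    using c[OF tstar_subseq_norm_in_asym_struct[OF assms(1) _ kk(1)]] by blast
  then have "tstar_subseq_norm kk n (\<lambda>_. 1) \<le> c"
    by (intro nm_norm_ones_le_of_linf_equiv[OF nm_norm_tstar_subseq_norm[OF kk(1)] n(1)])
  moreover have "l1_norm y \<le> tstar_subseq_norm kk n (\<lambda>_. 1)"
    using l1_norm_le_tstar_subseq_norm_ones[OF kk(1) y(1,2,4) n(2)] .
  ultimately show False
    using y(5) by linarith
qed

end
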